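(* Let $L$ be an $\omega$-regular language and let $\mathcal{F}=(M,\{A^u\})$ be the periodic (respectively syntactic, recurrent) FDFA of $L$. Define $UP_{\mathrm{orig}}(\mathcal{F})$ as the set of words $uv^\omega$ ($u\in\Sigma^*$, $v\in\Sigma^+$) such that: in the periodic case, $v\in L(A^{M(u)})$; in the syntactic and recurrent cases, $M(uv)=M(u)$ and $v\in L(A^{M(u)})$. Then $UP_{\mathrm{orig}}(\mathcal{F})=UP(\mathcal{F})$.
   Context: For a complete DFA $A$ and finite word $w$, $A(w)$ is the state reached from the initial state on $w$. An FDFA is $\mathcal{F}=(M,\{A^q\}_{q\in Q})$ with $M$ a complete DFA without accepting states and each $A^q$ a complete DFA; $(u,v)$ is accepted by $\mathcal{F}$ iff $M(uv)=M(u)$ and $v\in L(A^{M(u)})$, and $UP(\mathcal{F})=\{uv^\omega: v\in\Sigma^+,\ (u,v)\text{ accepted}\}$. Canonical FDFAs of an $\omega$-regular $L$: $x\sim_L y$ iff $\forall w\in\Sigma^\omega$, $xw\in L\Leftrightarrow yw\in L$. The leading automaton has states the classes of $\sim_L$, initial state $[\epsilon]$, transitions $[x]\xrightarrow{a}[xa]$. For each state with representative $u$: $x\approx^u_P y$ iff $\forall v\in\Sigma^*$: $u(xv)^\omega\in L\Leftrightarrow u(yv)^\omega\in L$; $x\approx^u_S y$ iff $ux\sim_L uy$ and $\forall v$: $uxv\sim_L u\Rightarrow(u(xv)^\omega\in L\Leftrightarrow u(yv)^\omega\in L)$; $x\approx^u_R y$ iff $\forall v$: $(uxv\sim_L u\wedge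 u(xv)^\omega\in L)\Leftrightarrow(uyv\sim_L u\wedge u(yv)^\omega\in L)$. For $K\in\{P,S,R\}$ the progress automaton $A^u$ has states the classes of $\approx^u_K$, initial state $[\epsilon]$, transitions $[x]\xrightarrow{a}[xa]$, and accepting states the classes $[v]$ with $uv^\omega\in L$ ($K=P$), resp. with $uv\sim_L u$ and $uv^\omega\in L$ ($K\in\{S,R\}$). These are the periodic, syntactic and recurrent FDFAs of $L$. *)

theory Defs
  imports Main "HOL-Library.Omega_Words_Fun"
begin

definition omega_regular :: "('a::finite) word set \<Rightarrow> bool" where
  "omega_regular L \<longleftrightarrow>
     (\<exists>(Q::nat set) (I::nat set) (\<delta>::nat \<Rightarrow> 'a \<Rightarrow> nat set) (F::nat set).
        finite Q \<and> I \<subseteq> Q \<and> (\<forall>q a. \<delta> q a \<subseteq> Q) \<and>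
        L = {w. \<exists>r. r 0 \<in> I \<and> (\<forall>i. r (Suc i) \<in> \<delta> (r i) (w i))
                    \<and> (\<exists>\<^sub>\<infinity> i. r i \<in> F)})"

record ('s, 'a) dfa =
  dinit :: 's
  ddelta :: "'s \<Rightarrow> 'a \<Rightarrow> 's"
  daccept :: "'s set"

definition run :: "('s, 'a) dfa \<Rightarrow> 'a list \<Rightarrow> 's" where
  "run A w = foldl (ddelta A) (dinit A) w"

definition dlang :: "('s, 'a) dfa \<Rightarrow> 'a list set" where
  "dlang A = {w. run A w \<in> daccept A}"

type_synonym ('s, 't, 'a) fdfa = "('s, 'a) dfa \<times> ('s \<Rightarrow> ('t, 'a) dfa)"

definition fdfa_accepts :: "('s, 't, 'a) fdfa \<Rightarrow> 'a list \<Rightarrow> 'a list \<Rightarrow> bool" where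
  "fdfa_accepts F u v \<longleftrightarrow>
     run (fst F) (u @ v) = run (fst F) u \<and> v \<in> dlang (snd F (run (fst F) u))"

definition UP :: "('s, 't, 'a) fdfa \<Rightarrow> 'a word set" where
  "UP F = {u \<frown> v\<^sup>\<omega> | u v. v \<noteq> [] \<and> fdfa_accepts F u v}"

datatype kind = Periodic | Syntactic | Recurrent

definition simL :: "'a word set \<Rightarrow> 'a list \<Rightarrow> 'a list \<Rightarrow> bool" where
  "simL L x y \<longleftrightarrow> (\<forall>w. (x \<frown> w \<in> L) = (y \<frown> w \<in> L))"

text \<open>u w^omega in L; for w = [] the word u w^omega is finite, hence not in L.\<close>
definition per :: "'a word set \<Rightarrow> 'a list \<Rightarrow> 'a list \<Rightarrow> bool" where
  "per L u w \<longleftrightarrow> w \<noteq> [] \<and> u \<frown> w\<^sup>\<omega> \<in> L"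

definition simcls :: "'a word set \<Rightarrow> 'a list \<Rightarrow> 'a list set" where
  "simcls L x = {y. simL L x y}"

definition leading :: "'a word set \<Rightarrow> ('a list set, 'a) dfa" where
  "leading L = \<lparr> dinit = simcls L [],
                 ddelta = (\<lambda>C a. simcls L ((SOME x. x \<in> C) @ [a])),
                 daccept = {} \<rparr>"

definition approx :: "kind \<Rightarrow> 'a word set \<Rightarrow> 'a list \<Rightarrow> 'a list \<Rightarrow> 'a list \<Rightarrow> bool" where
  "approx K L u x y \<longleftrightarrow> (case K of
      Periodic \<Rightarrow> (\<forall>v. per L u (x @ v) = per L u (y @ v))
    | Syntactic \<Rightarrow> simL L (u @ x) (u @ y) \<and>
        (\<forall>v. simL L (u @ x @ v) u \<longrightarrow> (per L u (x @ v) = per L u (y @ v)))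
    | Recurrent \<Rightarrow> (\<forall>v. (simL L (u @ x @ v) u \<and> per L u (x @ v))
                      = (simL L (u @ y @ v) u \<and> per L u (y @ v))))"

definition pcls :: "kind \<Rightarrow> 'a word set \<Rightarrow> 'a list \<Rightarrow> 'a list \<Rightarrow> 'a list set" where
  "pcls K L u x = {y. approx K L u x y}"

definition progress_acc :: "kind \<Rightarrow> 'a word set \<Rightarrow> 'a list \<Rightarrow> 'a list \<Rightarrow> bool" where
  "progress_acc K L u v \<longleftrightarrow> (case K of
      Periodic \<Rightarrow> per L u v
    | _ \<Rightarrow> simL L (u @ v) u \<and> per L u v)"

definition progress :: "kind \<Rightarrow> 'a word set \<Rightarrow> 'a list \<Rightarrow> ('a list set, 'a) dfa" where
  "progress K L u = \<lparr> dinit = pcls K L u [],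
                      ddelta = (\<lambda>C a. pcls K L u ((SOME x. x \<in> C) @ [a])),
                      daccept = {pcls K L u v | v. progress_acc K L u v} \<rparr>"

definition canonical :: "kind \<Rightarrow> 'a word set \<Rightarrow> ('a list set \<Rightarrow> 'a list)
                          \<Rightarrow> ('a list set, 'a list set, 'a) fdfa" where
  "canonical K L rep = (leading L, (\<lambda>C. progress K L (rep C)))"

definition UP_orig :: "kind \<Rightarrow> ('s, 't, 'a) fdfa \<Rightarrow> 'a word set" where
  "UP_orig K F = (if K = Periodic
     then {u \<frown> v\<^sup>\<omega> | u v. v \<noteq> [] \<and> v \<in> dlang (snd F (run (fst F) u))}
     else {u \<frown> v\<^sup>\<omega> | u v. v \<noteq> [] \<and> run (fst F) (u @ v) = run (fst F) u
                              \<and> v \<in> dlang (snd F (run (fst F) u))})"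

end

theory Submission
  imports Defs
begin

text \<open>For the syntactic and recurrent FDFAs the two definitions of UP coincide
literally.  For the periodic FDFA, take u v^\<omega> with v accepted by the progress
automaton of [u].  The relation ~_L has finite index, since two words on which a Buchi
automaton for L reaches the same set of states are ~_L-equivalent; hence
u v^i ~_L u v^j for some i < j.  The lasso x = u v^i, y = v^(j-i) describes the same
word and loops on the leading automaton, and y is accepted by the periodic progress
automaton of [x], because that automaton accepts exactly the periods y with
x y^\<omega> \<in> L.\<close>

lemma equivp_Collect_eq_iff: "equivp R \<Longrightarrow> Collect (R x) = Collect (R y) \<longleftrightarrow> R x y"
  by (metis Collect_inj equivp_def)

lemma run_quotient_dfa:
  assumes R: "equivp R"
    and cong: "\<And>x y a. R x y \<Longrightarrow> R (x @ [a]) (y @ [a])"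
    and init: "dinit A = Collect (R [])"
    and step: "\<And>C a. ddelta A C a = Collect (R ((SOME x. x \<in> C) @ [a]))"
  shows "run A w = Collect (R w)"
proof (induction w rule: rev_induct)
  case Nil
  then show ?case by (simp add: run_def init)
next
  case (snoc a w)
  have "(SOME x. x \<in> Collect (R w)) \<in> Collect (R w)"
    by (rule someI[of _ w]) (simp add: equivp_reflp[OF R])
  then have "R (w @ [a]) ((SOME x. x \<in> Collect (R w)) @ [a])"
    by (simp add: cong)
  with snoc show ?case
    by (simp add: run_def step equivp_Collect_eq_iff[OF R] equivp_symp[OF R])
qed

lemma equivp_simL: "equivp (simL L)"
  by (intro equivpI reflpI sympI transpI) (auto simp: simL_def)

lemma simL_append: "simL L x y \<Longrightarrow> simL L (x @ z) (y @ z)"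
  unfolding simL_def by (metis conc_conc)

lemma simcls_eq_iff: "simcls L x = simcls L y \<longleftrightarrow> simL L x y"
  unfolding simcls_def by (rule equivp_Collect_eq_iff[OF equivp_simL])

lemma run_leading: "run (leading L) w = simcls L w"
  using run_quotient_dfa[OF equivp_simL simL_append, where A = "leading L"]
  by (simp add: leading_def simcls_def)

lemma per_simL: "simL L u u' \<Longrightarrow> per L u v \<longleftrightarrow> per L u' v"
  by (simp add: simL_def per_def)

lemma equivp_approx_Periodic: "equivp (approx Periodic L u)"
  by (intro equivpI reflpI sympI transpI) (auto simp: approx_def)

lemma approx_Periodic_append:
  "approx Periodic L u x y \<Longrightarrow> approx Periodic L u (x @ z) (y @ z)"
  by (simp add: approx_def)

lemma run_progress_Periodic: "run (progress Periodic L u) w = pcls Periodic L u w"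
  using run_quotient_dfa[OF equivp_approx_Periodic approx_Periodic_append,
      where A = "progress Periodic L u"]
  by (simp add: progress_def pcls_def)

lemma dlang_progress_Periodic: "v \<in> dlang (progress Periodic L u) \<longleftrightarrow> per L u v"
proof -
  have "v \<in> dlang (progress Periodic L u)
          \<longleftrightarrow> (\<exists>v'. approx Periodic L u v v' \<and> per L u v')"
    unfolding dlang_def mem_Collect_eq run_progress_Periodic
    by (auto simp: progress_def progress_acc_def pcls_def
        equivp_Collect_eq_iff[OF equivp_approx_Periodic])
  also have "\<dots> \<longleftrightarrow> per L u v"
    using equivp_reflp[OF equivp_approx_Periodic]
    by (auto simp: approx_def dest: spec[of _ "[]"])
  finally show ?thesis .
qed

fun reach :: "('q \<Rightarrow> 'a \<Rightarrow> 'q set) \<Rightarrow> 'q set \<Rightarrow> 'a list \<Rightarrow> 'q set" where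
  "reach \<delta> S [] = S"
| "reach \<delta> S (a # x) = reach \<delta> (\<Union>q\<in>S. \<delta> q a) x"

definition accepts_from :: "('q \<Rightarrow> 'a \<Rightarrow> 'q set) \<Rightarrow> 'q set \<Rightarrow> 'q \<Rightarrow> 'a word \<Rightarrow> bool" where
  "accepts_from \<delta> F q w \<longleftrightarrow>
     (\<exists>r. r 0 = q \<and> (\<forall>i. r (Suc i) \<in> \<delta> (r i) (w i)) \<and> (\<exists>\<^sub>\<infinity> i. r i \<in> F))"

lemma INFM_Suc_iff: "(\<exists>\<^sub>\<infinity>n. P (Suc n)) \<longleftrightarrow> (\<exists>\<^sub>\<infinity>n. P n)"
  unfolding INFM_nat
proof (intro iffI allI)
  fix m
  assume "\<forall>m. \<exists>n>m. P (Suc n)"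
  then obtain n where "n > m" "P (Suc n)" by blast
  then show "\<exists>n>m. P n" using less_SucI by blast
next
  fix m
  assume "\<forall>m. \<exists>n>m. P n"
  then obtain n where "n > Suc m" "P n" by blast
  then show "\<exists>n>m. P (Suc n)" by (cases n) auto
qed

lemma accepts_from_build:
  "accepts_from \<delta> F q (a ## w) \<longleftrightarrow> (\<exists>q'\<in>\<delta> q a. accepts_from \<delta> F q' w)"
proof
  assume "accepts_from \<delta> F q (a ## w)"
  then obtain r where r: "r 0 = q" "\<forall>i. r (Suc i) \<in> \<delta> (r i) ((a ## w) i)" "\<exists>\<^sub>\<infinity> i. r i \<in> F"
    unfolding accepts_from_def by blast
  have "r (Suc 0) \<in> \<delta> q a"
    using r(1) r(2)[rule_format, of 0] by simp
  moreover have "r (Suc (Suc i)) \<in> \<delta> (r (Suc i)) (w i)" for i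
    using r(2)[rule_format, of "Suc i"] by simp
  then have "accepts_from \<delta> F (r (Suc 0)) w"
    unfolding accepts_from_def using r(3) INFM_Suc_iff[of "\<lambda>i. r i \<in> F"]
    by (intro exI[of _ "\<lambda>i. r (Suc i)"]) simp
  ultimately show "\<exists>q'\<in>\<delta> q a. accepts_from \<delta> F q' w" ..
next
  assume "\<exists>q'\<in>\<delta> q a. accepts_from \<delta> F q' w"
  then obtain r where r: "r 0 \<in> \<delta> q a" "\<forall>i. r (Suc i) \<in> \<delta> (r i) (w i)" "\<exists>\<^sub>\<infinity> i. r i \<in> F"
    unfolding accepts_from_def by blast
  have "(q ## r) (Suc i) \<in> \<delta> ((q ## r) i) ((a ## w) i)" for i
    using r(1,2) by (cases i) auto
  moreover have "\<exists>\<^sub>\<infinity> i. (q ## r) i \<in> F"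
    using r(3) INFM_Suc_iff[of "\<lambda>i. (q ## r) i \<in> F"] by simp
  ultimately show "accepts_from \<delta> F q (a ## w)"
    unfolding accepts_from_def by (intro exI[of _ "q ## r"]) simp
qed

lemma accepts_from_conc:
  "(\<exists>q\<in>S. accepts_from \<delta> F q (x \<frown> w)) \<longleftrightarrow> (\<exists>q\<in>reach \<delta> S x. accepts_from \<delta> F q w)"
proof (induction x arbitrary: S)
  case (Cons a x)
  have "(\<exists>q\<in>S. accepts_from \<delta> F q ((a # x) \<frown> w))
          \<longleftrightarrow> (\<exists>q\<in>(\<Union>q\<in>S. \<delta> q a). accepts_from \<delta> F q (x \<frown> w))"
    by (auto simp: accepts_from_build)
  with Cons.IH show ?case by simp
qed simp

lemma reach_subset: "S \<subseteq> Q \<Longrightarrow> \<forall>q a. \<delta> q a \<subseteq> Q \<Longrightarrow> reach \<delta> S x \<subseteq> Q"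
  by (induction x arbitrary: S) (simp_all add: UN_subset_iff)

lemma omega_regular_finite_index:
  assumes "omega_regular L"
  shows "finite (range (simcls L))"
proof -
  obtain Q I F and \<delta> :: "nat \<Rightarrow> 'a \<Rightarrow> nat set"
    where Q: "finite Q" "I \<subseteq> Q" "\<forall>q a. \<delta> q a \<subseteq> Q"
      and L_def: "L = {w. \<exists>r. r 0 \<in> I \<and> (\<forall>i. r (Suc i) \<in> \<delta> (r i) (w i))
                            \<and> (\<exists>\<^sub>\<infinity> i. r i \<in> F)}"
    using assms unfolding omega_regular_def by (elim exE conjE) (rule that; assumption)
  have L: "w \<in> L \<longleftrightarrow> (\<exists>q\<in>I. accepts_from \<delta> F q w)" for w
    unfolding L_def accepts_from_def by blast
  define class_of where "class_of S = simcls L (SOME x. reach \<delta> I x = S)" for S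
  have "range (reach \<delta> I) \<subseteq> Pow Q"
    using reach_subset[OF Q(2,3)] by blast
  then have "finite (range (reach \<delta> I))"
    using Q(1) by (simp add: finite_subset)
  moreover have "simcls L x = class_of (reach \<delta> I x)" for x
  proof -
    have "reach \<delta> I (SOME y. reach \<delta> I y = reach \<delta> I x) = reach \<delta> I x"
      by (rule someI) (rule refl)
    then show ?thesis
      by (simp add: class_of_def simcls_eq_iff simL_def L accepts_from_conc)
  qed
  ultimately show ?thesis
    using finite_range_imageI[of "reach \<delta> I" class_of] by simp
qed

lemma finite_range_repeats:
  fixes f :: "nat \<Rightarrow> 'b"
  assumes "finite (range f)"
  shows "\<exists>i j. i < j \<and> f i = f j"
proof -
  obtain i where "infinite {j. f j = f i}"
    using pigeonhole_infinite[of UNIV f] assms by auto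
  then obtain j where "j > i" "f j = f i"
    unfolding infinite_nat_iff_unbounded by blast
  then show ?thesis by metis
qed

lemma concat_replicate_nth:
  "m < k * length v \<Longrightarrow> concat (replicate k v) ! m = v ! (m mod length v)"
proof (induction k arbitrary: m)
  case (Suc k)
  then show ?case
    by (cases "m < length v") (auto simp: nth_append le_mod_geq)
qed simp

lemma iter_concat_replicate:
  assumes "v \<noteq> []" "0 < k"
  shows "(concat (replicate k v))\<^sup>\<omega> = v\<^sup>\<omega>"
proof
  fix n
  have "length (concat (replicate k v)) = k * length v"
    by (simp add: length_concat sum_list_replicate)
  with assms show "(concat (replicate k v))\<^sup>\<omega> n = v\<^sup>\<omega> n"
    by (simp add: concat_replicate_nth mod_mod_cancel)
qed

lemma conc_concat_replicate_iter: "v \<noteq> [] \<Longrightarrow> concat (replicate i v) \<frown> v\<^sup>\<omega> = v\<^sup>\<omega>"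
  by (induction i) (simp_all flip: conc_conc iter_unroll)

lemma ex_lasso_looping_simL:
  assumes "finite (range (simcls L))" "v \<noteq> []"
  shows "\<exists>x y. y \<noteq> [] \<and> simL L (x @ y) x \<and> x \<frown> y\<^sup>\<omega> = u \<frown> v\<^sup>\<omega>"
proof -
  have "finite (range (\<lambda>k. simcls L (u @ concat (replicate k v))))"
    by (rule finite_subset[OF _ assms(1)]) blast
  then obtain i j where "i < j"
    and ij: "simcls L (u @ concat (replicate i v)) = simcls L (u @ concat (replicate j v))"
    using finite_range_repeats by blast
  define x where "x = u @ concat (replicate i v)"
  define y where "y = concat (replicate (j - i) v)"
  have "replicate j v = replicate i v @ replicate (j - i) v"
    using \<open>i < j\<close> by (simp flip: replicate_add)
  then have "x @ y = u @ concat (replicate j v)"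
    by (simp add: x_def y_def)
  then have "simL L (x @ y) x"
    using ij by (simp add: x_def simcls_eq_iff equivp_symp[OF equivp_simL])
  moreover have "y \<noteq> []"
    using assms(2) \<open>i < j\<close> by (simp add: y_def)
  moreover have "x \<frown> y\<^sup>\<omega> = u \<frown> v\<^sup>\<omega>"
    using assms(2) \<open>i < j\<close>
    by (simp add: x_def y_def iter_concat_replicate conc_concat_replicate_iter flip: conc_conc)
  ultimately show ?thesis by blast
qed

lemma per_rep:
  assumes "\<forall>x. rep (simcls L x) \<in> simcls L x"
  shows "per L (rep (simcls L x)) v \<longleftrightarrow> per L x v"
proof -
  have "rep (simcls L x) \<in> simcls L x"
    using assms by blast
  then have "simL L x (rep (simcls L x))"
    by (simp only: simcls_def mem_Collect_eq)
  then show ?thesis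
    by (rule per_simL[symmetric])
qed

lemma dlang_canonical_Periodic:
  assumes "\<forall>x. rep (simcls L x) \<in> simcls L x"
  shows "v \<in> dlang (snd (canonical Periodic L rep) (run (fst (canonical Periodic L rep)) u))
           \<longleftrightarrow> per L u v"
  by (simp add: canonical_def run_leading dlang_progress_Periodic per_rep[OF assms])

lemma UP_orig_canonical_Periodic:
  assumes "\<forall>x. rep (simcls L x) \<in> simcls L x"
  shows "UP_orig Periodic (canonical Periodic L rep) = {u \<frown> v\<^sup>\<omega> | u v. per L u v}"
  unfolding UP_orig_def dlang_canonical_Periodic[OF assms] by (simp add: per_def)

lemma UP_canonical_Periodic:
  assumes "\<forall>x. rep (simcls L x) \<in> simcls L x"
  shows "UP (canonical Periodic L rep) = {x \<frown> y\<^sup>\<omega> | x y. simL L (x @ y) x \<and> per L x y}"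
proof -
  have "run (fst (canonical Periodic L rep)) (x @ y) = run (fst (canonical Periodic L rep)) x
          \<longleftrightarrow> simL L (x @ y) x" for x y
    by (simp add: canonical_def run_leading simcls_eq_iff)
  then show ?thesis
    unfolding UP_def fdfa_accepts_def dlang_canonical_Periodic[OF assms] by (auto simp: per_def)
qed

lemma per_imp_mem_UP_canonical_Periodic:
  assumes "omega_regular L" "\<forall>x. rep (simcls L x) \<in> simcls L x" "per L u v"
  shows "u \<frown> v\<^sup>\<omega> \<in> UP (canonical Periodic L rep)"
proof -
  from assms(3) have "v \<noteq> []" and uv: "u \<frown> v\<^sup>\<omega> \<in> L"
    unfolding per_def by simp_all
  then obtain x y where "y \<noteq> []" "simL L (x @ y) x" "x \<frown> y\<^sup>\<omega> = u \<frown> v\<^sup>\<omega>"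
    using ex_lasso_looping_simL[OF omega_regular_finite_index[OF assms(1)]] by blast
  moreover from this uv have "per L x y"
    unfolding per_def by simp
  ultimately have "u \<frown> v\<^sup>\<omega> = x \<frown> y\<^sup>\<omega> \<and> simL L (x @ y) x \<and> per L x y"
    by simp
  then show ?thesis
    unfolding UP_canonical_Periodic[OF assms(2)] by (intro CollectI exI)
qed

theorem lemma6:
  fixes L :: "('a::finite) word set"
    and K :: kind
    and rep :: "'a list set \<Rightarrow> 'a list"
  assumes "omega_regular L"
    and "\<forall>x. rep (simcls L x) \<in> simcls L x"
  shows "UP_orig K (canonical K L rep) = UP (canonical K L rep)"
proof (cases "K = Periodic")
  case False
  then show ?thesis
    unfolding UP_orig_def UP_def fdfa_accepts_def by simp
next
  case True
  have "UP_orig Periodic (canonical Periodic L rep) \<subseteq> UP (canonical Periodic L rep)"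
    using per_imp_mem_UP_canonical_Periodic[OF assms]
    unfolding UP_orig_canonical_Periodic[OF assms(2)] by blast
  moreover have "UP (canonical Periodic L rep) \<subseteq> UP_orig Periodic (canonical Periodic L rep)"
    unfolding UP_orig_canonical_Periodic[OF assms(2)] UP_canonical_Periodic[OF assms(2)] by blast
  ultimately show ?thesis
    using True by simp
qed

end
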